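(* Let $k\ge 1$ and let $G$ be a complete $k$-partite graph in which every partite set has at least $2$ vertices. Then $\rho_T(G)=k$.
   Context: Graphs are finite and simple. A complete $k$-partite graph is one whose vertex set is partitioned into $k$ nonempty independent sets (partite sets) such that two vertices are adjacent iff they lie in different partite sets. For $u,v\in(\mathbb{R}\cup\{\infty\})^k$ the min-plus tropical dot product is $u\odot v=\min_i(u_i+v_i)$. A min-plus $k$-tropical dot product representation of $G=(V,E)$ is a map $f:V\to(\mathbb{R}\cup\{\infty\})^k$ with a threshold $t>0$ such that for all distinct $x,y\in V$: $xy\in E$ iff $f(x)\odot f(y)\ge t$. $\rho_T(G)$ is the least $k\ge 1$ for which such a representation exists. *)

theory Defs
  imports "HOL-Analysis.Analysis" "HOL-Library.Extended_Real"
begin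

definition simple_graph :: "'a set \<Rightarrow> ('a \<Rightarrow> 'a \<Rightarrow> bool) \<Rightarrow> bool" where
  "simple_graph V E \<longleftrightarrow> finite V \<and> (\<forall>x\<in>V. \<forall>y\<in>V. E x y \<longleftrightarrow> E y x) \<and> (\<forall>x\<in>V. \<not> E x x)"

definition complete_multipartite_with ::
  "'a set \<Rightarrow> ('a \<Rightarrow> 'a \<Rightarrow> bool) \<Rightarrow> nat \<Rightarrow> 'a set set \<Rightarrow> bool" where
  "complete_multipartite_with V E k P \<longleftrightarrow>
     card P = k \<and> finite P \<and> (\<forall>A\<in>P. A \<noteq> {} \<and> A \<subseteq> V) \<and> \<Union>P = V \<and>
     (\<forall>A\<in>P. \<forall>B\<in>P. A \<noteq> B \<longrightarrow> A \<inter> B = {}) \<and>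
     (\<forall>x\<in>V. \<forall>y\<in>V. x \<noteq> y \<longrightarrow> (E x y \<longleftrightarrow> \<not> (\<exists>A\<in>P. x \<in> A \<and> y \<in> A)))"

text \<open>Vectors in (R \<union> {\<infinity>})^k are modelled as functions nat \<Rightarrow> ereal whose components
  with index < k are never -\<infinity> (components \<ge> k are irrelevant).\<close>
definition trop_dot :: "nat \<Rightarrow> (nat \<Rightarrow> ereal) \<Rightarrow> (nat \<Rightarrow> ereal) \<Rightarrow> ereal" where
  "trop_dot k u v = Min ((\<lambda>i. u i + v i) ` {..<k})"

definition trop_rep :: "'a set \<Rightarrow> ('a \<Rightarrow> 'a \<Rightarrow> bool) \<Rightarrow> nat \<Rightarrow> ('a \<Rightarrow> nat \<Rightarrow> ereal) \<Rightarrow> real \<Rightarrow> bool" where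
  "trop_rep V E k f t \<longleftrightarrow> t > 0 \<and> (\<forall>x\<in>V. \<forall>i<k. f x i \<noteq> -\<infinity>) \<and>
     (\<forall>x\<in>V. \<forall>y\<in>V. x \<noteq> y \<longrightarrow> (E x y \<longleftrightarrow> trop_dot k (f x) (f y) \<ge> ereal t))"

definition has_trop_rep :: "'a set \<Rightarrow> ('a \<Rightarrow> 'a \<Rightarrow> bool) \<Rightarrow> nat \<Rightarrow> bool" where
  "has_trop_rep V E k \<longleftrightarrow> (\<exists>f t. trop_rep V E k f t)"

definition rho_T :: "'a set \<Rightarrow> ('a \<Rightarrow> 'a \<Rightarrow> bool) \<Rightarrow> nat" where
  "rho_T V E = (LEAST k. k \<ge> 1 \<and> has_trop_rep V E k)"

end

theory Submission
  imports Defs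
begin

text \<open>Giving the vertices of the \<open>i\<close>-th partite set the value \<open>0\<close> in coordinate \<open>i\<close> and \<open>1\<close>
  elsewhere represents the graph with threshold \<open>1\<close>. Conversely, in a representation with
  threshold \<open>t\<close>, every partite set contains two non-adjacent vertices, so it owns a coordinate in
  which their entries sum to less than \<open>t\<close>. Two different partite sets cannot own the same
  coordinate \<open>i\<close>: for \<open>x, y\<close> in one and \<open>u, v\<close> in the other, all cross pairs are adjacent, so
  \<open>(x\<^sub>i + u\<^sub>i) + (y\<^sub>i + v\<^sub>i) \<ge> 2t > (x\<^sub>i + y\<^sub>i) + (u\<^sub>i + v\<^sub>i)\<close>, although both sides are equal.
  Hence there are at least as many coordinates as partite sets.\<close>

lemma trop_dot_ge_iff:
  assumes "k \<ge> 1"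
  shows "c \<le> trop_dot k u v \<longleftrightarrow> (\<forall>i<k. c \<le> u i + v i)"
  using assms unfolding trop_dot_def by (auto simp: Min_ge_iff lessThan_empty_iff)

lemma trop_dot_le: "i < k \<Longrightarrow> trop_dot k u v \<le> u i + v i"
  unfolding trop_dot_def by (intro Min_le) auto

lemma ereal_exchange_sums_ge:
  fixes a b c d t :: ereal
  assumes "t \<le> a + c" "t \<le> b + d"
  shows "t \<le> a + b \<or> t \<le> c + d"
proof (rule ccontr)
  assume "\<not> ?thesis"
  then have "(a + b) + (c + d) < t + t"
    by (simp add: not_le ereal_add_strict_mono2)
  also have "t + t \<le> (a + c) + (b + d)"
    using assms by (rule add_mono)
  also have "\<dots> = (a + b) + (c + d)"
    by (simp add: ac_simps)
  finally show False
    by simp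
qed

lemma complete_multipartite_nonadj_same_part:
  assumes "complete_multipartite_with V E k P" "A \<in> P" "x \<in> A" "y \<in> A" "x \<noteq> y"
  shows "\<not> E x y"
  using assms unfolding complete_multipartite_with_def by blast

lemma complete_multipartite_adj_different_parts:
  assumes cm: "complete_multipartite_with V E k P"
    and "A \<in> P" "B \<in> P" "A \<noteq> B" "x \<in> A" "y \<in> B"
  shows "x \<noteq> y \<and> E x y"
proof -
  from cm have sub: "\<forall>C\<in>P. C \<subseteq> V"
    and disj: "\<forall>C\<in>P. \<forall>D\<in>P. C \<noteq> D \<longrightarrow> C \<inter> D = {}"
    and adj: "\<forall>x\<in>V. \<forall>y\<in>V. x \<noteq> y \<longrightarrow> (E x y \<longleftrightarrow> \<not> (\<exists>C\<in>P. x \<in> C \<and> y \<in> C))"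
    unfolding complete_multipartite_with_def by auto
  have "x \<noteq> y"
    using disj assms(2-6) by blast
  moreover have "\<not> (\<exists>C\<in>P. x \<in> C \<and> y \<in> C)"
    using disj assms(2-6) by blast
  moreover have "x \<in> V" "y \<in> V"
    using sub assms(2,3,5,6) by auto
  ultimately show ?thesis
    using adj by blast
qed

lemma trop_rep_nonadj_small_coordinate:
  assumes "trop_rep V E m f t" "m \<ge> 1" "x \<in> V" "y \<in> V" "x \<noteq> y" "\<not> E x y"
  shows "\<exists>i<m. f x i + f y i < ereal t"
  using assms trop_dot_ge_iff[of m "ereal t"] unfolding trop_rep_def by (auto simp: not_le)

lemma trop_rep_adj_coordinate:
  assumes "trop_rep V E m f t" "x \<in> V" "y \<in> V" "x \<noteq> y" "E x y" "i < m"
  shows "ereal t \<le> f x i + f y i"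
  using assms order_trans[OF _ trop_dot_le] unfolding trop_rep_def by blast

lemma complete_multipartite_has_trop_rep:
  assumes "k \<ge> 1" and cm: "complete_multipartite_with V E k P"
  shows "has_trop_rep V E k"
proof -
  from cm have "finite P" "card P = k"
    and adj: "\<forall>x\<in>V. \<forall>y\<in>V. x \<noteq> y \<longrightarrow> (E x y \<longleftrightarrow> \<not> (\<exists>A\<in>P. x \<in> A \<and> y \<in> A))"
    unfolding complete_multipartite_with_def by auto
  then obtain part where "bij_betw part {..<k} P"
    using ex_bij_betw_nat_finite lessThan_atLeast0 by metis
  then have parts: "part ` {..<k} = P"
    by (simp add: bij_betw_def)
  define f where "f x i = (if x \<in> part i then 0 else 1 :: ereal)" for x i
  have "ereal 1 \<le> trop_dot k (f x) (f y) \<longleftrightarrow> \<not> (\<exists>A\<in>P. x \<in> A \<and> y \<in> A)" for x y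
    using parts by (auto simp: trop_dot_ge_iff[OF assms(1)] f_def)
  then have "trop_rep V E k f 1"
    unfolding trop_rep_def using adj by (auto simp: f_def)
  then show ?thesis
    unfolding has_trop_rep_def by blast
qed

lemma complete_multipartite_parts_own_coordinate:
  assumes cm: "complete_multipartite_with V E k P" and rep: "trop_rep V E m f t"
    and "m \<ge> 1" "A \<in> P" "card A \<ge> 2"
  shows "\<exists>i<m. \<exists>x\<in>A. \<exists>y\<in>A. x \<noteq> y \<and> f x i + f y i < ereal t"
proof -
  have "finite A" "\<not> card A \<le> Suc 0"
    using \<open>card A \<ge> 2\<close> card.infinite by fastforce+
  then obtain x y where xy: "x \<in> A" "y \<in> A" "x \<noteq> y"
    using card_le_Suc0_iff_eq by blast
  moreover have "x \<in> V" "y \<in> V"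
    using cm \<open>A \<in> P\<close> xy unfolding complete_multipartite_with_def by auto
  moreover have "\<not> E x y"
    using complete_multipartite_nonadj_same_part[OF cm \<open>A \<in> P\<close> xy] .
  ultimately obtain i where "i < m" "f x i + f y i < ereal t"
    using trop_rep_nonadj_small_coordinate[OF rep \<open>m \<ge> 1\<close>] \<open>x \<noteq> y\<close> by blast
  then show ?thesis
    using xy by blast
qed

lemma complete_multipartite_coordinate_owner_unique:
  assumes cm: "complete_multipartite_with V E k P" and rep: "trop_rep V E m f t"
    and "i < m" "A \<in> P" "B \<in> P"
    and "x \<in> A" "y \<in> A" "f x i + f y i < ereal t"
    and "u \<in> B" "v \<in> B" "f u i + f v i < ereal t"
  shows "A = B"
proof (rule ccontr)
  assume "A \<noteq> B"
  have cross: "ereal t \<le> f p i + f q i" if "p \<in> A" "q \<in> B" for p q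
  proof -
    have "p \<noteq> q" "E p q"
      using complete_multipartite_adj_different_parts[OF cm \<open>A \<in> P\<close> \<open>B \<in> P\<close> \<open>A \<noteq> B\<close> that]
      by auto
    moreover have "p \<in> V" "q \<in> V"
      using cm that \<open>A \<in> P\<close> \<open>B \<in> P\<close> unfolding complete_multipartite_with_def by auto
    ultimately show ?thesis
      using trop_rep_adj_coordinate[OF rep _ _ _ _ \<open>i < m\<close>] by blast
  qed
  have "ereal t \<le> f x i + f u i" "ereal t \<le> f y i + f v i"
    using cross assms(6,7,9,10) by auto
  then have "ereal t \<le> f x i + f y i \<or> ereal t \<le> f u i + f v i"
    by (rule ereal_exchange_sums_ge)
  then show False
    using assms(8,11) by (simp add: not_le[symmetric])
qed

lemma complete_multipartite_trop_rep_dim_ge: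
  assumes cm: "complete_multipartite_with V E k P" and "\<forall>A\<in>P. card A \<ge> 2"
    and "m \<ge> 1" "has_trop_rep V E m"
  shows "k \<le> m"
proof -
  obtain f t where rep: "trop_rep V E m f t"
    using \<open>has_trop_rep V E m\<close> unfolding has_trop_rep_def by blast
  have own: "\<forall>A\<in>P. \<exists>i<m. \<exists>x\<in>A. \<exists>y\<in>A. x \<noteq> y \<and> f x i + f y i < ereal t"
    using complete_multipartite_parts_own_coordinate[OF cm rep \<open>m \<ge> 1\<close>] assms(2) by blast
  obtain owned where owned: "\<forall>A\<in>P. owned A < m \<and>
      (\<exists>x\<in>A. \<exists>y\<in>A. x \<noteq> y \<and> f x (owned A) + f y (owned A) < ereal t)"
    using bchoice[OF own] by blast
  have inj: "inj_on owned P"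
  proof (rule inj_onI)
    fix A B assume AB: "A \<in> P" "B \<in> P" "owned A = owned B"
    obtain x y where xy: "x \<in> A" "y \<in> A" "f x (owned A) + f y (owned A) < ereal t"
      using owned AB(1) by blast
    obtain u v where uv: "u \<in> B" "v \<in> B" "f u (owned A) + f v (owned A) < ereal t"
      using owned AB(2) unfolding AB(3) by blast
    have "owned A < m"
      using owned AB(1) by blast
    then show "A = B"
      by (rule complete_multipartite_coordinate_owner_unique[OF cm rep _ AB(1,2) xy uv])
  qed
  have "owned ` P \<subseteq> {..<m}"
    using owned by auto
  then have "card P \<le> card {..<m}"
    using card_inj_on_le[OF inj] by blast
  then show ?thesis
    using cm unfolding complete_multipartite_with_def by simp
qed

theorem mainTheorem14:
  fixes V :: "'a set" and E :: "'a \<Rightarrow> 'a \<Rightarrow> bool" and k :: nat and P :: "'a set set"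
  assumes "k \<ge> 1"
    and "simple_graph V E"
    and "complete_multipartite_with V E k P"
    and "\<forall>A\<in>P. card A \<ge> 2"
  shows "rho_T V E = k"
  unfolding rho_T_def
proof (rule Least_equality)
  show "1 \<le> k \<and> has_trop_rep V E k"
    using assms(1) complete_multipartite_has_trop_rep[OF assms(1,3)] by simp
next
  show "k \<le> m" if "1 \<le> m \<and> has_trop_rep V E m" for m
    using complete_multipartite_trop_rep_dim_ge[OF assms(3,4)] that by simp
qed

end
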